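(* Let $K$ be any field, let $L\subset\mathbb{Z}^m$ be a non-zero lattice with $L\cap\mathbb{N}^m=\{\mathbf 0\}$, and let $I_L\subset K[x_1,\ldots,x_m]$ be its lattice ideal. If $F_1,\ldots,F_s\in I_L$ are polynomials with $\mathrm{rad}(I_L)=\mathrm{rad}(F_1,\ldots,F_s)$, then $\bigcup_{i=1}^{s}\Gamma_L(F_i)$ is a spanning subcomplex of $\Gamma_L$.
   Context: For $\mathbf u\in\mathbb{N}^m$ write $\mathbf x^{\mathbf u}=x_1^{u_1}\cdots x_m^{u_m}$; for $\mathbf u\in\mathbb{Z}^m$, $\mathbf u_+,\mathbf u_-\in\mathbb{N}^m$ are its positive and negative parts ($\mathbf u=\mathbf u_+-\mathbf u_-$). The lattice ideal is $I_L=(\mathbf x^{\mathbf u_+}-\mathbf x^{\mathbf u_-}:\mathbf u\in L)$. The saturation is $\mathrm{Sat}(L)=\{\mathbf u\in\mathbb{Z}^m: d\mathbf u\in L\text{ for some nonzero }d\in\mathbb{Z}\}$, and $\mathcal{A}=\{\mathbf a_1,\ldots,\mathbf a_m\}\subset\mathbb{Z}^n$ is a vector configuration with $\mathrm{Sat}(L)=\ker_{\mathbb{Z}}(\mathcal{A})=\{\mathbf q\in\mathbb{Z}^m:\sum q_i\mathbf a_i=\mathbf 0\}$. The $\mathcal{A}$-degree of $\mathbf x^{\mathbf u}$ is $\sum u_i\mathbf a_i$. The support of $\mathbf v\in\mathbb{Z}^m$ is $\mathrm{supp}(\mathbf v)=\{i:v_i\neq0\}$, and $\mathrm{supp}(\mathbf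 x^{\mathbf w})=\mathrm{supp}(\mathbf w)$. A monomial $M$ is an indispensable monomial of $I_L$ if every system of binomial generators of $I_L$ contains a binomial having $M$ as one of its monomials. Let $\mathcal{T}$ be the set of supports of indispensable monomials of $I_L$ and $\mathcal{T}_{\min}$ the set of inclusion-minimal elements of $\mathcal{T}$. The simplicial complex $\Gamma_L$ has vertex set $\mathcal{T}_{\min}$, and a subset $\{E_1,\ldots,E_k\}\subseteq\mathcal{T}_{\min}$ is a face iff there exist monomials $M_1,\ldots,M_k$ with $\mathrm{supp}(M_i)=E_i$ all having the same $\mathcal{A}$-degree. For a polynomial $F$, $\Gamma_L(F)$ is the induced subcomplex of $\Gamma_L$ on the vertices $E\in\mathcal{T}_{\min}$ such that $E=\mathrm{supp}(M)$ for some monomial $M$ occurring in $F$. A subcomplex is spanning if it has the same vertex set as $\Gamma_L$. *)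

theory Defs
  imports Main "HOL-Library.Poly_Mapping"
begin

text \<open>Polynomials over a ring 'k in the variables x_0, ..., x_(m-1) (indices shifted by one
 w.r.t. the paper).\<close>

type_synonym 'k mpoly = "(nat \<Rightarrow>\<^sub>0 nat) \<Rightarrow>\<^sub>0 'k"

definition xmon :: "(nat \<Rightarrow>\<^sub>0 nat) \<Rightarrow> 'k::comm_ring_1 mpoly" where
  "xmon u = Poly_Mapping.single u 1"

definition is_exp :: "nat \<Rightarrow> (nat \<Rightarrow>\<^sub>0 nat) \<Rightarrow> bool" where
  "is_exp m u \<longleftrightarrow> Poly_Mapping.keys u \<subseteq> {..<m}"

definition polys :: "nat \<Rightarrow> 'k::comm_ring_1 mpoly set" where
  "polys m = {p. \<forall>u\<in>Poly_Mapping.keys p. is_exp m u}"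

definition gen_ideal :: "nat \<Rightarrow> 'k::comm_ring_1 mpoly set \<Rightarrow> 'k mpoly set" where
  "gen_ideal m S = {p. \<exists>G c. finite G \<and> G \<subseteq> S \<and> (\<forall>g\<in>G. c g \<in> polys m)
                         \<and> p = (\<Sum>g\<in>G. c g * g)}"

definition radical :: "nat \<Rightarrow> 'k::comm_ring_1 mpoly set \<Rightarrow> 'k mpoly set" where
  "radical m I = {f \<in> polys m. \<exists>n::nat. f ^ n \<in> I}"

definition zvec :: "nat \<Rightarrow> (nat \<Rightarrow> int) set" where
  "zvec m = {u. \<forall>i\<ge>m. u i = 0}"

definition is_lattice :: "nat \<Rightarrow> (nat \<Rightarrow> int) set \<Rightarrow> bool" where
  "is_lattice m L \<longleftrightarrow> L \<subseteq> zvec m \<and> (\<lambda>_. 0) \<in> L \<and> (\<forall>u\<in>L. \<forall>v\<in>L. (\<lambda>i. u i + v i) \<in> L \<and> (\<lambda>i. - u i) \<in> L)"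

text \<open>Positive part u_+ of an integer vector, as an exponent vector (u_- = posp m (\<lambda>i. - u i)).\<close>
definition posp :: "nat \<Rightarrow> (nat \<Rightarrow> int) \<Rightarrow> (nat \<Rightarrow>\<^sub>0 nat)" where
  "posp m u = Abs_poly_mapping (\<lambda>i. if i < m then nat (u i) else 0)"

definition lattice_ideal :: "'k::comm_ring_1 itself \<Rightarrow> nat \<Rightarrow> (nat \<Rightarrow> int) set \<Rightarrow> 'k mpoly set" where
  "lattice_ideal K m L =
     gen_ideal m {xmon (posp m u) - xmon (posp m (\<lambda>i. - u i)) | u. u \<in> L}"

definition Sat :: "nat \<Rightarrow> (nat \<Rightarrow> int) set \<Rightarrow> (nat \<Rightarrow> int) set" where
  "Sat m L = {u \<in> zvec m. \<exists>d::int. d \<noteq> 0 \<and> (\<lambda>i. d * u i) \<in> L}"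

text \<open>Vector configuration A = {a_0,...,a_(m-1)} in Z^n: the vector a_i has coordinates A i j, j < n.\<close>
definition kerZ :: "nat \<Rightarrow> nat \<Rightarrow> (nat \<Rightarrow> nat \<Rightarrow> int) \<Rightarrow> (nat \<Rightarrow> int) set" where
  "kerZ m n A = {q \<in> zvec m. \<forall>j<n. (\<Sum>i<m. q i * A i j) = 0}"

definition Adeg :: "nat \<Rightarrow> nat \<Rightarrow> (nat \<Rightarrow> nat \<Rightarrow> int) \<Rightarrow> (nat \<Rightarrow>\<^sub>0 nat) \<Rightarrow> (nat \<Rightarrow> int)" where
  "Adeg m n A u = (\<lambda>j. if j < n then (\<Sum>i<m. int (Poly_Mapping.lookup u i) * A i j) else 0)"

definition binomial_gen_system ::
    "'k::comm_ring_1 itself \<Rightarrow> nat \<Rightarrow> (nat \<Rightarrow> int) set \<Rightarrow> ((nat \<Rightarrow>\<^sub>0 nat) \<times> (nat \<Rightarrow>\<^sub>0 nat)) set \<Rightarrow> bool" where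
  "binomial_gen_system K m L B \<longleftrightarrow>
     (\<forall>(u, v)\<in>B. is_exp m u \<and> is_exp m v \<and> u \<noteq> v) \<and>
     gen_ideal m {(xmon u - xmon v :: 'k mpoly) | u v. (u, v) \<in> B} = lattice_ideal K m L"

definition indispensable_monomial ::
    "'k::comm_ring_1 itself \<Rightarrow> nat \<Rightarrow> (nat \<Rightarrow> int) set \<Rightarrow> (nat \<Rightarrow>\<^sub>0 nat) \<Rightarrow> bool" where
  "indispensable_monomial K m L w \<longleftrightarrow> is_exp m w \<and>
     (\<forall>B. binomial_gen_system K m L B \<longrightarrow> (\<exists>(u, v)\<in>B. w = u \<or> w = v))"

definition Tsupp :: "'k::comm_ring_1 itself \<Rightarrow> nat \<Rightarrow> (nat \<Rightarrow> int) set \<Rightarrow> nat set set" where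
  "Tsupp K m L = {Poly_Mapping.keys w | w. indispensable_monomial K m L w}"

definition Tmin :: "'k::comm_ring_1 itself \<Rightarrow> nat \<Rightarrow> (nat \<Rightarrow> int) set \<Rightarrow> nat set set" where
  "Tmin K m L = {E \<in> Tsupp K m L. \<forall>E'\<in>Tsupp K m L. E' \<subseteq> E \<longrightarrow> E' = E}"

definition GammaL ::
    "'k::comm_ring_1 itself \<Rightarrow> nat \<Rightarrow> nat \<Rightarrow> (nat \<Rightarrow> nat \<Rightarrow> int) \<Rightarrow> (nat \<Rightarrow> int) set \<Rightarrow> nat set set set" where
  "GammaL K m n A L = {\<sigma>. \<sigma> \<subseteq> Tmin K m L \<and>
     (\<exists>M d. \<forall>E\<in>\<sigma>. is_exp m (M E) \<and> Poly_Mapping.keys (M E) = E \<and> Adeg m n A (M E) = d)}"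

definition GammaF ::
    "'k::comm_ring_1 itself \<Rightarrow> nat \<Rightarrow> nat \<Rightarrow> (nat \<Rightarrow> nat \<Rightarrow> int) \<Rightarrow> (nat \<Rightarrow> int) set \<Rightarrow> 'k mpoly \<Rightarrow> nat set set set" where
  "GammaF K m n A L F = {\<sigma> \<in> GammaL K m n A L.
     \<sigma> \<subseteq> {E \<in> Tmin K m L. \<exists>u\<in>Poly_Mapping.keys F. Poly_Mapping.keys u = E}}"

definition spanning_subcomplex ::
    "'k::comm_ring_1 itself \<Rightarrow> nat \<Rightarrow> nat \<Rightarrow> (nat \<Rightarrow> nat \<Rightarrow> int) \<Rightarrow> (nat \<Rightarrow> int) set \<Rightarrow> nat set set set \<Rightarrow> bool" where
  "spanning_subcomplex K m n A L \<Delta> \<longleftrightarrow>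
     \<Delta> \<subseteq> GammaL K m n A L \<and> (\<forall>\<sigma>\<in>\<Delta>. \<forall>\<tau>\<subseteq>\<sigma>. \<tau> \<in> \<Delta>) \<and> \<Union>\<Delta> = Tmin K m L"

end

theory Submission
  imports Defs
begin

text \<open>Let \<open>E \<in> \<T>\<^sub>m\<^sub>i\<^sub>n\<close> be the support of an indispensable monomial \<open>x\<^sup>w\<close>. Some binomial
  \<open>x\<^sup>w - x\<^sup>v\<close> with \<open>v \<noteq> w\<close> lies in \<open>I\<^sub>L\<close>, so a power of it is a combination of the \<open>F\<^sub>i\<close>.
  Substituting \<open>x\<^sub>j := 0\<close> for all \<open>j \<notin> E\<close> is a ring homomorphism into a domain which keeps
  \<open>x\<^sup>w\<close> and hence does not kill that power; so it does not kill some \<open>F\<^sub>i\<close>, i.e. some monomial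
  of \<open>F\<^sub>i\<close> has support inside \<open>E\<close>. Every monomial of a polynomial in \<open>I\<^sub>L\<close> has a partner in
  the same \<open>L\<close>-fibre, and below such a monomial sits a componentwise minimal monomial with a
  partner, which is indispensable; minimality of \<open>E\<close> in \<open>\<T>\<close> then forces the support to be
  exactly \<open>E\<close>.\<close>

abbreviation lookup :: "('a \<Rightarrow>\<^sub>0 'b::zero) \<Rightarrow> 'a \<Rightarrow> 'b" where
  "lookup \<equiv> poly_mapping.lookup"

abbreviation keys :: "('a \<Rightarrow>\<^sub>0 'b::zero) \<Rightarrow> 'a set" where
  "keys \<equiv> Poly_Mapping.keys"

abbreviation single :: "'a \<Rightarrow> 'b::zero \<Rightarrow> 'a \<Rightarrow>\<^sub>0 'b" where
  "single \<equiv> Poly_Mapping.single"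

section \<open>Polynomials as finitely supported maps\<close>

lemma poly_mapping_monomial_expansion: "p = (\<Sum>u\<in>keys p. single u (lookup p u))"
  by (rule poly_mapping_eqI) (simp add: lookup_sum lookup_single when_def in_keys_iff)

lemma keys_add_nat: "keys (u + v :: 'a \<Rightarrow>\<^sub>0 nat) = keys u \<union> keys v"
  by (auto simp: in_keys_iff lookup_add)

lemma times_single_one_expansion:
  "(p::'k::comm_ring_1 mpoly) * single b 1 = (\<Sum>u\<in>keys p. single (u + b) (lookup p u))"
  by (subst poly_mapping_monomial_expansion[of p]) (simp add: sum_distrib_right mult_single)

lemma lookup_times_single_one_eq_0:
  assumes "\<not> lookup a \<le> lookup g"
  shows "lookup ((p::'k::comm_ring_1 mpoly) * single a 1) g = 0"
proof -
  have "u + a \<noteq> g" for u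
    using assms by (auto simp: le_fun_def lookup_add)
  then show ?thesis
    by (simp add: times_single_one_expansion lookup_sum lookup_single)
qed

lemma lookup_times_binomial_eq_0:
  assumes "\<not> lookup a \<le> lookup g" and "\<not> lookup b \<le> lookup g"
  shows "lookup ((p::'k::comm_ring_1 mpoly) * (xmon a - xmon b)) g = 0"
  using assms by (simp add: xmon_def right_diff_distrib lookup_minus lookup_times_single_one_eq_0)

lemma xmon_add: "xmon (a + b) = (xmon a * xmon b :: 'k::comm_ring_1 mpoly)"
  by (simp add: xmon_def mult_single)

lemma is_exp_add: "is_exp m a \<Longrightarrow> is_exp m b \<Longrightarrow> is_exp m (a + b)"
  unfolding is_exp_def by (simp add: keys_add_nat)

lemma polys_mult: "p \<in> polys m \<Longrightarrow> q \<in> polys m \<Longrightarrow> p * q \<in> polys m"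
  unfolding polys_def using keys_mult[of p q] is_exp_add by blast

lemma polys_sum: "(\<And>x. x \<in> A \<Longrightarrow> f x \<in> polys m) \<Longrightarrow> sum f A \<in> polys m"
  unfolding polys_def using keys_sum[of f A] by blast

lemma polys_diff: "p \<in> polys m \<Longrightarrow> q \<in> polys m \<Longrightarrow> p - q \<in> polys m"
  unfolding polys_def using keys_diff[of p q] by blast

lemma xmon_in_polys: "is_exp m u \<Longrightarrow> xmon u \<in> polys m"
  unfolding polys_def xmon_def by simp

lemma one_in_polys: "1 \<in> polys m"
  unfolding polys_def is_exp_def by simp

lemma gen_ideal_subset_polys: "S \<subseteq> polys m \<Longrightarrow> gen_ideal m S \<subseteq> polys m"
  unfolding gen_ideal_def by (auto intro!: polys_sum polys_mult)

lemma gen_ideal_generator: "g \<in> S \<Longrightarrow> g \<in> gen_ideal m S"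
  unfolding gen_ideal_def
  by (intro CollectI exI[of _ "{g}"] exI[of _ "\<lambda>_. 1"]) (simp add: one_in_polys)

lemma gen_ideal_mono: "S \<subseteq> T \<Longrightarrow> gen_ideal m S \<subseteq> gen_ideal m T"
  unfolding gen_ideal_def by blast

lemma gen_ideal_subset_without_zero:
  assumes "S \<subseteq> insert 0 T"
  shows "gen_ideal m S \<subseteq> gen_ideal m T"
proof
  fix p assume "p \<in> gen_ideal m S"
  then obtain G c where G: "finite G" "G \<subseteq> S" "\<forall>g\<in>G. c g \<in> polys m"
    and p: "p = (\<Sum>g\<in>G. c g * g)"
    unfolding gen_ideal_def by blast
  have "p = (\<Sum>g\<in>G - {0}. c g * g)"
    unfolding p using G(1) by (rule sum.mono_neutral_right) auto
  moreover have "G - {0} \<subseteq> T"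
    using G(2) assms by blast
  ultimately show "p \<in> gen_ideal m T"
    unfolding gen_ideal_def using G by (intro CollectI exI[of _ "G - {0}"] exI[of _ c]) auto
qed

section \<open>Killing the variables outside a set\<close>

text \<open>This is the substitution \<open>x\<^sub>j := 0\<close> for \<open>j \<notin> E\<close>, hence a ring homomorphism.\<close>

definition restrict_support :: "'a set \<Rightarrow> (('a \<Rightarrow>\<^sub>0 nat) \<Rightarrow>\<^sub>0 'k::comm_ring_1) \<Rightarrow> ('a \<Rightarrow>\<^sub>0 nat) \<Rightarrow>\<^sub>0 'k"
  where "restrict_support E p = Abs_poly_mapping (\<lambda>u. if keys u \<subseteq> E then lookup p u else 0)"

lemma lookup_restrict_support:
  "lookup (restrict_support E p) u = (if keys u \<subseteq> E then lookup p u else 0)"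
proof -
  have "finite {u. (if keys u \<subseteq> E then lookup p u else 0) \<noteq> 0}"
    by (rule finite_subset[of _ "keys p"]) (auto simp: in_keys_iff)
  then show ?thesis
    unfolding restrict_support_def by simp
qed

lemma restrict_support_add: "restrict_support E (p + q) = restrict_support E p + restrict_support E q"
  by (rule poly_mapping_eqI) (simp add: lookup_restrict_support lookup_add)

lemma restrict_support_sum: "restrict_support E (sum f A) = (\<Sum>a\<in>A. restrict_support E (f a))"
proof (induction A rule: infinite_finite_induct)
  case empty
  show ?case by (rule poly_mapping_eqI) (simp add: lookup_restrict_support)
qed (simp_all add: restrict_support_add poly_mapping_eqI lookup_restrict_support)

lemma restrict_support_single:
  "restrict_support E (single u a) = (if keys u \<subseteq> E then single u a else 0)"
  by (rule poly_mapping_eqI) (auto simp: lookup_restrict_support lookup_single when_def)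

lemma restrict_support_expansion:
  "restrict_support E p = (\<Sum>u\<in>keys p. if keys u \<subseteq> E then single u (lookup p u) else 0)"
  by (subst poly_mapping_monomial_expansion[of p])
    (simp add: restrict_support_sum restrict_support_single)

lemma restrict_support_mult:
  "restrict_support E (p * q) = restrict_support E p * restrict_support E q"
proof -
  have "p * q = (\<Sum>u\<in>keys p. \<Sum>v\<in>keys q. single (u + v) (lookup p u * lookup q v))"
    by (subst poly_mapping_monomial_expansion[of p], subst poly_mapping_monomial_expansion[of q])
      (simp add: sum_product mult_single)
  then have "restrict_support E (p * q) =
      (\<Sum>u\<in>keys p. \<Sum>v\<in>keys q. restrict_support E (single (u + v) (lookup p u * lookup q v)))"
    by (simp add: restrict_support_sum)
  also have "\<dots> = (\<Sum>u\<in>keys p. \<Sum>v\<in>keys q.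
      (if keys u \<subseteq> E then single u (lookup p u) else 0) *
      (if keys v \<subseteq> E then single v (lookup q v) else 0))"
    by (intro sum.cong refl) (auto simp: restrict_support_single keys_add_nat mult_single)
  also have "\<dots> = restrict_support E p * restrict_support E q"
    by (simp add: restrict_support_expansion sum_product)
  finally show ?thesis .
qed

lemma restrict_support_power: "restrict_support E (p ^ n) = restrict_support E p ^ n"
proof (induction n)
  case 0
  show ?case by (rule poly_mapping_eqI) (auto simp: lookup_restrict_support lookup_one when_def)
qed (simp add: restrict_support_mult)

section \<open>Lattice fibres\<close>

definition exp_diff :: "(nat \<Rightarrow>\<^sub>0 nat) \<Rightarrow> (nat \<Rightarrow>\<^sub>0 nat) \<Rightarrow> nat \<Rightarrow> int" where
  "exp_diff a b = (\<lambda>i. int (lookup a i) - int (lookup b i))"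

lemma lattice_add: "is_lattice m L \<Longrightarrow> u \<in> L \<Longrightarrow> v \<in> L \<Longrightarrow> (\<lambda>i. u i + v i) \<in> L"
  and lattice_uminus: "is_lattice m L \<Longrightarrow> u \<in> L \<Longrightarrow> (\<lambda>i. - u i) \<in> L"
  and lattice_zero: "is_lattice m L \<Longrightarrow> (\<lambda>_. 0) \<in> L"
  and lattice_subset_zvec: "is_lattice m L \<Longrightarrow> u \<in> L \<Longrightarrow> u \<in> zvec m"
  unfolding is_lattice_def by blast+

lemma lookup_posp: "lookup (posp m u) i = (if i < m then nat (u i) else 0)"
proof -
  have "finite {i. (if i < m then nat (u i) else 0) \<noteq> 0}"
    by (rule finite_subset[of _ "{..<m}"]) auto
  then show ?thesis
    unfolding posp_def by simp
qed

lemma is_exp_posp: "is_exp m (posp m u)"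
  unfolding is_exp_def by (auto simp: in_keys_iff lookup_posp split: if_splits)

lemma exp_diff_posp: "u \<in> zvec m \<Longrightarrow> exp_diff (posp m u) (posp m (\<lambda>i. - u i)) = u"
  unfolding exp_diff_def zvec_def by (auto simp: lookup_posp fun_eq_iff)

lemma exp_diff_self: "exp_diff u u = (\<lambda>_. 0)"
  by (simp add: exp_diff_def)

lemma exp_diff_commute_in_lattice:
  "is_lattice m L \<Longrightarrow> exp_diff a b \<in> L \<Longrightarrow> exp_diff b a \<in> L"
  using lattice_uminus[of m L "exp_diff a b"] by (simp add: exp_diff_def)

lemma exp_diff_in_lattice_shift:
  assumes L: "is_lattice m L" and ab: "exp_diff a b \<in> L"
  shows "exp_diff (u + a) c \<in> L \<longleftrightarrow> exp_diff (u + b) c \<in> L"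
proof
  assume "exp_diff (u + a) c \<in> L"
  from lattice_add[OF L this lattice_uminus[OF L ab]]
  show "exp_diff (u + b) c \<in> L" by (simp add: exp_diff_def lookup_add algebra_simps)
next
  assume "exp_diff (u + b) c \<in> L"
  from lattice_add[OF L this ab]
  show "exp_diff (u + a) c \<in> L" by (simp add: exp_diff_def lookup_add algebra_simps)
qed

lemma binomial_in_lattice_ideal:
  assumes L: "is_lattice m L" and g: "is_exp m g" and h: "is_exp m h"
    and gh: "exp_diff g h \<in> L"
  shows "(xmon g - xmon h :: 'k::comm_ring_1 mpoly) \<in> lattice_ideal K m L"
proof -
  define u where "u = exp_diff g h"
  define c where "c = Abs_poly_mapping (\<lambda>i. min (lookup g i) (lookup h i))"
  have "finite {i. min (lookup g i) (lookup h i) \<noteq> 0}"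
    by (rule finite_subset[of _ "keys g"]) (auto simp: in_keys_iff)
  then have lookup_c: "lookup c i = min (lookup g i) (lookup h i)" for i
    unfolding c_def by simp
  have outside: "lookup g i = 0" "lookup h i = 0" if "\<not> i < m" for i
    using g h that unfolding is_exp_def by (auto simp: in_keys_iff)
  have "g = c + posp m u" "h = c + posp m (\<lambda>i. - u i)"
    by (auto intro!: poly_mapping_eqI simp: lookup_add lookup_posp lookup_c u_def exp_diff_def outside)
  then have "xmon g - xmon h = xmon c * (xmon (posp m u) - xmon (posp m (\<lambda>i. - u i)) :: 'k mpoly)"
    by (metis xmon_add right_diff_distrib)
  moreover have "keys c \<subseteq> keys g"
    by (auto simp: in_keys_iff lookup_c)
  then have "is_exp m c"
    using g unfolding is_exp_def by blast
  ultimately show ?thesis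
    unfolding lattice_ideal_def gen_ideal_def using gh u_def
    by (intro CollectI exI[of _ "{xmon (posp m u) - xmon (posp m (\<lambda>i. - u i))}"]
        exI[of _ "\<lambda>_. xmon c"] conjI) (auto intro: xmon_in_polys)
qed

lemma lattice_ideal_subset_polys: "lattice_ideal K m L \<subseteq> polys m"
  unfolding lattice_ideal_def
  by (rule gen_ideal_subset_polys) (auto intro!: polys_diff xmon_in_polys is_exp_posp)

text \<open>The coefficient sum over an \<open>L\<close>-fibre vanishes on \<open>I\<^sub>L\<close>; this is why every monomial of an
  element of \<open>I\<^sub>L\<close> has a partner in its fibre.\<close>

definition fibre_coeff_sum :: "(nat \<Rightarrow> int) set \<Rightarrow> (nat \<Rightarrow>\<^sub>0 nat) \<Rightarrow> 'k::comm_ring_1 mpoly \<Rightarrow> 'k"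
  where "fibre_coeff_sum L a p = (\<Sum>u\<in>keys p. if exp_diff u a \<in> L then lookup p u else 0)"

lemma fibre_coeff_sum_add:
  "fibre_coeff_sum L a (p + q) = fibre_coeff_sum L a p + fibre_coeff_sum L a q"
  unfolding fibre_coeff_sum_def by (rule setsum_keys_plus_distrib) auto

lemma fibre_coeff_sum_diff:
  "fibre_coeff_sum L a (p - q) = fibre_coeff_sum L a p - fibre_coeff_sum L a q"
  using fibre_coeff_sum_add[of L a "p - q" q] by simp

lemma fibre_coeff_sum_sum: "fibre_coeff_sum L a (sum f A) = (\<Sum>x\<in>A. fibre_coeff_sum L a (f x))"
  by (induction A rule: infinite_finite_induct)
    (simp_all add: fibre_coeff_sum_add, simp_all add: fibre_coeff_sum_def)

lemma fibre_coeff_sum_single: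
  "fibre_coeff_sum L a (single u c) = (if exp_diff u a \<in> L then c else 0)"
  by (simp add: fibre_coeff_sum_def)

lemma fibre_coeff_sum_times_binomial:
  assumes L: "is_lattice m L" and bb': "exp_diff b b' \<in> L"
  shows "fibre_coeff_sum L a ((c::'k::comm_ring_1 mpoly) * (single b 1 - single b' 1)) = 0"
proof -
  have "fibre_coeff_sum L a (c * (single b 1 - single b' 1)) =
      fibre_coeff_sum L a (c * single b 1) - fibre_coeff_sum L a (c * single b' 1)"
    by (simp only: right_diff_distrib fibre_coeff_sum_diff)
  also have "\<dots> = 0"
    by (simp add: times_single_one_expansion fibre_coeff_sum_sum fibre_coeff_sum_single
        exp_diff_in_lattice_shift[OF L bb'])
  finally show ?thesis .
qed

lemma fibre_coeff_sum_lattice_ideal: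
  assumes L: "is_lattice m L" and p: "p \<in> lattice_ideal K m L"
  shows "fibre_coeff_sum L a p = 0"
proof -
  obtain G c where G: "G \<subseteq> {xmon (posp m u) - xmon (posp m (\<lambda>i. - u i)) | u. u \<in> L}"
    and p: "p = (\<Sum>g\<in>G. c g * g)"
    using p unfolding lattice_ideal_def gen_ideal_def by blast
  have "fibre_coeff_sum L a (c g * g) = 0" if "g \<in> G" for g
  proof -
    obtain u where u: "u \<in> L" "g = xmon (posp m u) - xmon (posp m (\<lambda>i. - u i))"
      using G \<open>g \<in> G\<close> by blast
    then have "exp_diff (posp m u) (posp m (\<lambda>i. - u i)) \<in> L"
      using exp_diff_posp lattice_subset_zvec[OF L] by simp
    from fibre_coeff_sum_times_binomial[OF L this] show ?thesis
      using u by (simp only: xmon_def)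
  qed
  then show ?thesis
    by (simp add: p fibre_coeff_sum_sum)
qed

lemma lattice_ideal_monomial_partner:
  assumes L: "is_lattice m L" and p: "p \<in> lattice_ideal K m L" and u: "u \<in> keys p"
  shows "\<exists>u'\<in>keys p. u' \<noteq> u \<and> exp_diff u' u \<in> L"
proof (rule ccontr)
  assume "\<not> ?thesis"
  then have "fibre_coeff_sum L u p = (\<Sum>x\<in>keys p. if x = u then lookup p u else 0)"
    unfolding fibre_coeff_sum_def
    by (intro sum.cong refl) (auto simp: exp_diff_self lattice_zero[OF L])
  also have "\<dots> = lookup p u"
    using u by simp
  finally show False
    using fibre_coeff_sum_lattice_ideal[OF L p] u by (simp add: in_keys_iff)
qed

section \<open>Indispensable monomials\<close>

definition has_fibre_partner :: "nat \<Rightarrow> (nat \<Rightarrow> int) set \<Rightarrow> (nat \<Rightarrow>\<^sub>0 nat) \<Rightarrow> bool" where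
  "has_fibre_partner m L g \<longleftrightarrow> is_exp m g \<and> (\<exists>h. is_exp m h \<and> h \<noteq> g \<and> exp_diff g h \<in> L)"

lemma lattice_ideal_monomial_has_fibre_partner:
  assumes L: "is_lattice m L" and p: "p \<in> lattice_ideal K m L" and u: "u \<in> keys p"
  shows "has_fibre_partner m L u"
proof -
  obtain u' where "u' \<in> keys p" "u' \<noteq> u" "exp_diff u' u \<in> L"
    using lattice_ideal_monomial_partner[OF L p u] by blast
  moreover have "p \<in> polys m"
    using p lattice_ideal_subset_polys by blast
  ultimately show ?thesis
    unfolding has_fibre_partner_def polys_def using u exp_diff_commute_in_lattice[OF L] by blast
qed

lemma pointwise_minimal_exists:
  fixes g0 :: "'a \<Rightarrow>\<^sub>0 nat"
  assumes "P g0"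
  shows "\<exists>g. lookup g \<le> lookup g0 \<and> P g \<and> (\<forall>g'. lookup g' \<le> lookup g \<and> g' \<noteq> g \<longrightarrow> \<not> P g')"
proof -
  define deg where "deg g = (\<Sum>i\<in>keys g0. lookup g i)" for g :: "'a \<Rightarrow>\<^sub>0 nat"
  obtain g where g: "P g" "lookup g \<le> lookup g0"
    and least: "\<And>y. P y \<and> lookup y \<le> lookup g0 \<Longrightarrow> deg g \<le> deg y"
    using ex_has_least_nat[of "\<lambda>g. P g \<and> lookup g \<le> lookup g0" g0 deg] assms by blast
  have "\<not> P g'" if g': "lookup g' \<le> lookup g" "g' \<noteq> g" for g'
  proof
    assume "P g'"
    moreover have "lookup g' \<le> lookup g0"
      using g'(1) g(2) by (rule order_trans)
    ultimately have "deg g \<le> deg g'"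
      using least by blast
    obtain i where i: "lookup g' i < lookup g i"
      using g' by (metis le_funD le_neq_trans poly_mapping_eqI)
    then have "i \<in> keys g0"
      using g(2) by (metis in_keys_iff le_funD not_less0 le_zero_eq)
    then have "deg g' < deg g"
      unfolding deg_def using i g'(1) by (intro sum_strict_mono_ex1) (auto simp: le_fun_def)
    with \<open>deg g \<le> deg g'\<close> show False by simp
  qed
  then show ?thesis
    using g by blast
qed

lemma binomial_gen_system_fibre_partners:
  fixes K :: "'k::comm_ring_1 itself"
  assumes L: "is_lattice m L" and B: "binomial_gen_system K m L B" and ab: "(a, b) \<in> B"
  shows "has_fibre_partner m L a" "has_fibre_partner m L b"
proof -
  have a_b: "a \<noteq> b"
    using B ab unfolding binomial_gen_system_def by blast
  have "(xmon a - xmon b :: 'k mpoly) \<in> lattice_ideal K m L"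
    using B ab unfolding binomial_gen_system_def by (blast intro: gen_ideal_generator)
  moreover have "a \<in> keys (xmon a - xmon b :: 'k mpoly)" "b \<in> keys (xmon a - xmon b :: 'k mpoly)"
    using a_b by (simp_all add: xmon_def in_keys_iff lookup_minus lookup_single)
  ultimately show "has_fibre_partner m L a" "has_fibre_partner m L b"
    using lattice_ideal_monomial_has_fibre_partner[OF L] by blast+
qed

text \<open>By minimality no binomial \<open>x\<^sup>a - x\<^sup>b\<close> of a generating system avoiding \<open>x\<^sup>g\<close> has \<open>x\<^sup>a\<close> or
  \<open>x\<^sup>b\<close> dividing \<open>x\<^sup>g\<close>, so \<open>x\<^sup>g\<close> does not occur in any combination of them; but
  \<open>x\<^sup>g - x\<^sup>h \<in> I\<^sub>L\<close>.\<close>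

lemma minimal_fibre_partner_indispensable:
  fixes K :: "'k::comm_ring_1 itself"
  assumes L: "is_lattice m L" and g: "has_fibre_partner m L g"
    and minimal: "\<And>g'. lookup g' \<le> lookup g \<Longrightarrow> g' \<noteq> g \<Longrightarrow> \<not> has_fibre_partner m L g'"
  shows "indispensable_monomial K m L g"
  unfolding indispensable_monomial_def
proof (intro conjI allI impI)
  show "is_exp m g"
    using g has_fibre_partner_def by blast
  fix B assume B: "binomial_gen_system K m L B"
  let ?S = "{(xmon u - xmon v :: 'k mpoly) | u v. (u, v) \<in> B}"
  show "\<exists>(u, v)\<in>B. g = u \<or> g = v"
  proof (rule ccontr)
    assume g_notin_B: "\<not> ?thesis"
    obtain h where h: "is_exp m h" "h \<noteq> g" "exp_diff g h \<in> L"
      using g has_fibre_partner_def by blast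
    have "(xmon g - xmon h :: 'k mpoly) \<in> gen_ideal m ?S"
      using binomial_in_lattice_ideal[OF L _ h(1) h(3)] g B
      unfolding has_fibre_partner_def binomial_gen_system_def by blast
    then obtain G c where G: "G \<subseteq> ?S" and gh: "(xmon g - xmon h :: 'k mpoly) = (\<Sum>j\<in>G. c j * j)"
      unfolding gen_ideal_def by blast
    have "lookup (c j * j) g = 0" if "j \<in> G" for j
    proof -
      obtain a b where ab: "(a, b) \<in> B" "j = xmon a - xmon b"
        using G \<open>j \<in> G\<close> by blast
      have "a \<noteq> g" "b \<noteq> g"
        using g_notin_B ab(1) by auto
      then have "\<not> lookup a \<le> lookup g" "\<not> lookup b \<le> lookup g"
        using minimal binomial_gen_system_fibre_partners[OF L B ab(1)] by blast+
      then show ?thesis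
        unfolding ab(2) by (rule lookup_times_binomial_eq_0)
    qed
    then have "lookup (xmon g - xmon h :: 'k mpoly) g = 0"
      unfolding gh lookup_sum by simp
    then show False
      using h(2) by (simp add: xmon_def lookup_minus lookup_single)
  qed
qed

lemma lattice_ideal_monomial_above_indispensable:
  fixes K :: "'k::comm_ring_1 itself"
  assumes L: "is_lattice m L" and p: "p \<in> lattice_ideal K m L" and u: "u \<in> keys p"
  shows "\<exists>g. lookup g \<le> lookup u \<and> indispensable_monomial K m L g"
proof -
  obtain g where g: "lookup g \<le> lookup u" "has_fibre_partner m L g"
    and minimal: "\<forall>g'. lookup g' \<le> lookup g \<and> g' \<noteq> g \<longrightarrow> \<not> has_fibre_partner m L g'"
    using pointwise_minimal_exists lattice_ideal_monomial_has_fibre_partner[OF L p u] by blast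
  then show ?thesis
    using minimal_fibre_partner_indispensable[OF L g(2)] by blast
qed

lemma Tmin_support_eq:
  fixes K :: "'k::comm_ring_1 itself"
  assumes L: "is_lattice m L" and E: "E \<in> Tmin K m L" and p: "p \<in> lattice_ideal K m L"
    and u: "u \<in> keys p" and uE: "keys u \<subseteq> E"
  shows "keys u = E"
proof -
  obtain g where g: "lookup g \<le> lookup u" "indispensable_monomial K m L g"
    using lattice_ideal_monomial_above_indispensable[OF L p u] by blast
  have "keys g \<subseteq> keys u"
  proof
    fix i assume "i \<in> keys g"
    then show "i \<in> keys u"
      using le_funD[OF g(1), of i] by (simp add: in_keys_iff)
  qed
  moreover have "keys g \<in> Tsupp K m L"
    unfolding Tsupp_def using g(2) by blast
  ultimately have "keys g = E"
    using E uE unfolding Tmin_def by blast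
  with \<open>keys g \<subseteq> keys u\<close> uE show ?thesis
    by blast
qed

text \<open>Every system of binomial generators must contain \<open>x\<^sup>w\<close>; apply this to the system of all
  nonzero lattice generators \<open>x\<^sup>u\<^sup>+ - x\<^sup>u\<^sup>-\<close>.\<close>

lemma indispensable_monomial_binomial:
  fixes K :: "'k::comm_ring_1 itself"
  assumes L: "is_lattice m L" and w: "indispensable_monomial K m L w"
  shows "\<exists>v. is_exp m v \<and> v \<noteq> w \<and> (xmon w - xmon v :: 'k mpoly) \<in> lattice_ideal K m L"
proof -
  define B where "B = {(posp m u, posp m (\<lambda>i. - u i)) | u. u \<in> L \<and> u \<noteq> (\<lambda>_. 0)}"
  let ?S = "{xmon (posp m u) - xmon (posp m (\<lambda>i. - u i)) | u. u \<in> L} :: 'k mpoly set"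
  have posp_neq: "posp m u \<noteq> posp m (\<lambda>i. - u i)" if "u \<in> L" "u \<noteq> (\<lambda>_. 0)" for u
    using that exp_diff_posp[OF lattice_subset_zvec[OF L]] exp_diff_self by metis
  have "binomial_gen_system K m L B"
    unfolding binomial_gen_system_def
  proof (intro conjI)
    show "\<forall>(a, b)\<in>B. is_exp m a \<and> is_exp m b \<and> a \<noteq> b"
      unfolding B_def using posp_neq is_exp_posp by blast
    have "?S \<subseteq> insert 0 {xmon a - xmon b | a b. (a, b) \<in> B}"
      unfolding B_def by fastforce
    then show "gen_ideal m {xmon a - xmon b | a b. (a, b) \<in> B} = lattice_ideal K m L"
      unfolding lattice_ideal_def
      by (intro equalityI gen_ideal_mono gen_ideal_subset_without_zero) (auto simp: B_def)
  qed
  then obtain u where u: "u \<in> L" "u \<noteq> (\<lambda>_. 0)"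
    and w_eq: "w = posp m u \<or> w = posp m (\<lambda>i. - u i)"
    using w unfolding indispensable_monomial_def B_def by blast
  have generator: "xmon (posp m v) - xmon (posp m (\<lambda>i. - v i)) \<in> lattice_ideal K m L"
    if "v \<in> L" for v
    unfolding lattice_ideal_def using that by (intro gen_ideal_generator) blast
  from w_eq show ?thesis
  proof
    assume "w = posp m u"
    then show ?thesis
      using generator[OF u(1)] posp_neq[OF u] is_exp_posp by metis
  next
    assume "w = posp m (\<lambda>i. - u i)"
    then show ?thesis
      using generator[OF lattice_uminus[OF L u(1)]] posp_neq[OF u] is_exp_posp by fastforce
  qed
qed

section \<open>The vertices of \<open>\<Gamma>\<^sub>L\<close>\<close>

lemma restrict_support_Tmin_lattice_ideal:
  fixes K :: "'k::comm_ring_1 itself"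
  assumes L: "is_lattice m L" and E: "E \<in> Tmin K m L" and p: "p \<in> lattice_ideal K m L"
    and no_E: "\<forall>u\<in>keys p. keys u \<noteq> E"
  shows "restrict_support E p = 0"
proof (rule poly_mapping_eqI)
  fix u
  have "\<not> (u \<in> keys p \<and> keys u \<subseteq> E)"
    using Tmin_support_eq[OF L E p] no_E by blast
  then show "lookup (restrict_support E p) u = lookup 0 u"
    by (auto simp: lookup_restrict_support in_keys_iff)
qed

lemma Tmin_support_of_monomial_in_generator:
  fixes K :: "'k::field itself" and F :: "nat \<Rightarrow> 'k mpoly"
  assumes L: "is_lattice m L"
    and F: "\<forall>i<s. F i \<in> lattice_ideal K m L"
    and rad: "radical m (lattice_ideal K m L) = radical m (gen_ideal m (F ` {..<s}))"
    and E: "E \<in> Tmin K m L"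
  shows "\<exists>i<s. \<exists>u\<in>keys (F i). keys u = E"
proof (rule ccontr)
  assume "\<not> ?thesis"
  then have F_E: "restrict_support E (F i) = 0" if "i < s" for i
    using restrict_support_Tmin_lattice_ideal[OF L E] F that by blast
  obtain w where w: "indispensable_monomial K m L w" "E = keys w"
    using E unfolding Tmin_def Tsupp_def by blast
  obtain v where v: "v \<noteq> w" "(xmon w - xmon v :: 'k mpoly) \<in> lattice_ideal K m L"
    using indispensable_monomial_binomial[OF L w(1)] by blast
  let ?b = "xmon w - xmon v :: 'k mpoly"
  have "?b \<in> radical m (lattice_ideal K m L)"
    unfolding radical_def using v(2) lattice_ideal_subset_polys
    by (intro CollectI conjI exI[of _ "1::nat"]) auto
  then obtain N where "?b ^ N \<in> gen_ideal m (F ` {..<s})"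
    unfolding rad unfolding radical_def by blast
  then obtain G c where G: "G \<subseteq> F ` {..<s}" and bN: "?b ^ N = (\<Sum>g\<in>G. c g * g)"
    unfolding gen_ideal_def by blast
  have "restrict_support E ?b ^ N = (\<Sum>g\<in>G. restrict_support E (c g) * restrict_support E g)"
    unfolding restrict_support_power[symmetric] bN restrict_support_sum restrict_support_mult ..
  also have "\<dots> = 0"
    using G F_E by (intro sum.neutral) auto
  finally have "restrict_support E ?b ^ N = 0" .
  moreover have "lookup (restrict_support E ?b) w = 1"
    using v(1) w(2) by (simp add: lookup_restrict_support xmon_def lookup_minus lookup_single)
  ultimately show False
    \<comment> \<open>the polynomial ring over a field has no zero divisors\<close>
    by fastforce
qed

lemma GammaF_subset_GammaL: "GammaF K m n A L F \<subseteq> GammaL K m n A L"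
  unfolding GammaF_def by (rule Collect_restrict)

lemma GammaL_face_subset_Tmin: "\<sigma> \<in> GammaL K m n A L \<Longrightarrow> \<sigma> \<subseteq> Tmin K m L"
  unfolding GammaL_def mem_Collect_eq by (rule conjunct1)

lemma GammaF_subset_closed:
  assumes "\<sigma> \<in> GammaF K m n A L F" and "\<tau> \<subseteq> \<sigma>"
  shows "\<tau> \<in> GammaF K m n A L F"
proof -
  obtain M d where M: "\<forall>E\<in>\<sigma>. is_exp m (M E) \<and> keys (M E) = E \<and> Adeg m n A (M E) = d"
    using assms(1) unfolding GammaF_def GammaL_def mem_Collect_eq by (elim conjE exE) blast
  have "\<sigma> \<subseteq> {E \<in> Tmin K m L. \<exists>u\<in>keys F. keys u = E}"
    using assms(1) unfolding GammaF_def by blast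
  then have "\<tau> \<subseteq> Tmin K m L" "\<tau> \<subseteq> {E \<in> Tmin K m L. \<exists>u\<in>keys F. keys u = E}"
    using assms(2) by blast+
  moreover have "\<forall>E\<in>\<tau>. is_exp m (M E) \<and> keys (M E) = E \<and> Adeg m n A (M E) = d"
    using M assms(2) by blast
  ultimately show ?thesis
    unfolding GammaF_def GammaL_def by blast
qed

lemma singleton_in_GammaF:
  assumes "E \<in> Tmin K m L" and "u \<in> keys F" and "keys u = E"
  shows "{E} \<in> GammaF K m n A L F"
proof -
  obtain w where "indispensable_monomial K m L w" "E = keys w"
    using assms(1) unfolding Tmin_def Tsupp_def by blast
  then have "{E} \<in> GammaL K m n A L"
    unfolding GammaL_def indispensable_monomial_def using assms(1)
    by (intro CollectI conjI exI[of _ "\<lambda>_. w"] exI[of _ "Adeg m n A w"]) auto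
  then show ?thesis
    unfolding GammaF_def using assms by blast
qed

lemma UN_GammaF_subset_closed:
  assumes "\<sigma> \<in> (\<Union>i\<in>I. GammaF K m n A L (F i))" and "\<tau> \<subseteq> \<sigma>"
  shows "\<tau> \<in> (\<Union>i\<in>I. GammaF K m n A L (F i))"
proof -
  from assms(1) obtain i where "i \<in> I" "\<sigma> \<in> GammaF K m n A L (F i)"
    by (rule UN_E)
  then show ?thesis
    using GammaF_subset_closed[OF _ assms(2)] by (intro UN_I)
qed

lemma Tmin_subset_vertices_UN_GammaF:
  fixes K :: "'k::field itself" and F :: "nat \<Rightarrow> 'k mpoly"
  assumes "is_lattice m L"
    and "\<forall>i<s. F i \<in> lattice_ideal K m L"
    and "radical m (lattice_ideal K m L) = radical m (gen_ideal m (F ` {..<s}))"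
  shows "Tmin K m L \<subseteq> \<Union>(\<Union>i<s. GammaF K m n A L (F i))"
proof
  fix E assume E: "E \<in> Tmin K m L"
  then obtain i u where "i < s" "u \<in> keys (F i)" "keys u = E"
    using Tmin_support_of_monomial_in_generator[OF assms] by blast
  then have "{E} \<in> (\<Union>i<s. GammaF K m n A L (F i))"
    using singleton_in_GammaF[OF E] by (intro UN_I[of i]) simp_all
  then show "E \<in> \<Union>(\<Union>i<s. GammaF K m n A L (F i))"
    by (rule UnionI) simp
qed

theorem theorem2p9:
  fixes K :: "'k::field itself"
    and m n :: nat
    and A :: "nat \<Rightarrow> nat \<Rightarrow> int"
    and L :: "(nat \<Rightarrow> int) set"
    and s :: nat
    and F :: "nat \<Rightarrow> 'k mpoly"
  assumes "is_lattice m L"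
    and "L \<noteq> {\<lambda>_. 0}"
    and "\<forall>u\<in>L. (\<forall>i. 0 \<le> u i) \<longrightarrow> u = (\<lambda>_. 0)"
    and "Sat m L = kerZ m n A"
    and "\<forall>i<s. F i \<in> lattice_ideal K m L"
    and "radical m (lattice_ideal K m L) = radical m (gen_ideal m (F ` {..<s}))"
  shows "spanning_subcomplex K m n A L (\<Union>i<s. GammaF K m n A L (F i))"
proof -
  let ?\<Delta> = "\<Union>i<s. GammaF K m n A L (F i)"
  have faces: "?\<Delta> \<subseteq> GammaL K m n A L"
    using GammaF_subset_GammaL by (rule UN_least)
  moreover have "\<forall>\<sigma>\<in>?\<Delta>. \<forall>\<tau>\<subseteq>\<sigma>. \<tau> \<in> ?\<Delta>"
    by (intro ballI allI impI) (erule UN_GammaF_subset_closed, assumption)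
  moreover have "\<Union>?\<Delta> \<subseteq> Tmin K m L"
    by (rule Union_least, rule GammaL_face_subset_Tmin, erule subsetD[OF faces])
  moreover have "Tmin K m L \<subseteq> \<Union>?\<Delta>"
    using Tmin_subset_vertices_UN_GammaF[OF assms(1,5,6)] .
  ultimately show ?thesis
    unfolding spanning_subcomplex_def by (meson subset_antisym)
qed

end
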